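(* Let $N\ge1$, let $(X_j)_{j\in\mathbb{N}}$ be an i.i.d. sequence of random vectors uniformly distributed on the unit sphere $S^{N-1}\subset\mathbb{R}^N$, and set $Y_n=\sum_{j=1}^n n^{-1/2}X_j$. Let $C\ge \sqrt{\frac{2}{N}}\sqrt{\frac{1}{1-(1/2)^{2/N}}}$. Then the family of random variables $\big(\exp(\|Y_n\|^2/C^2)\big)_{n\in\mathbb{N}}$ is uniformly integrable.
   Context: $\|\cdot\|$ denotes the Euclidean norm on $\mathbb{R}^N$. *)

theory Defs
  imports "HOL-Probability.Probability"
begin

text \<open>Normalized (uniform) surface measure on the unit sphere of a Euclidean space,
  defined as the cone measure: the push-forward of the uniform distribution on the
  unit ball under radial projection x \<mapsto> x / norm x, i.e.
  sigma(A) = lambda {t x. 0 < t \<le> 1, x \<in> A} / lambda (ball 0 1).\<close>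
definition sphere_unif :: "'a::euclidean_space measure" where
  "sphere_unif = distr (uniform_measure lborel (ball 0 1)) borel (\<lambda>x. x /\<^sub>R norm x)"

definition uniformly_integrable :: "'a measure \<Rightarrow> ('i \<Rightarrow> 'a \<Rightarrow> real) \<Rightarrow> bool" where
  "uniformly_integrable M f \<longleftrightarrow>
     (\<forall>i. integrable M (f i)) \<and>
     (\<forall>e>0. \<exists>K. \<forall>i.
        (\<integral>\<^sup>+ x. ennreal (indicator {y. K < \<bar>f i y\<bar>} x * \<bar>f i x\<bar>) \<partial>M) < ennreal e)"

end

theory Submission
  imports Defs
begin

text \<open>Let \<open>N = DIM('a)\<close> and let \<open>g\<close> be a standard Gaussian vector. In polar coordinates
  \<open>g / norm g\<close> is uniform on the sphere and independent of \<open>norm g\<close>, and Jensen gives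
  \<open>E (norm g) ^ (2 * j) \<ge> N ^ j\<close>; comparing the power series of \<open>cosh\<close> term by term, a uniform
  vector \<open>X\<close> on the sphere is therefore sub-Gaussian: \<open>E exp (w \<bullet> X) \<le> exp ((norm w)\<^sup>2 / (2 * N))\<close>.
  By independence the normalized sums \<open>Y\<^sub>n\<close> satisfy the same bound. Writing
  \<open>exp (a * (norm y)\<^sup>2) = E exp (sqrt (2 * a) * (y \<bullet> g))\<close> and exchanging expectations then gives
  \<open>E exp (a * (norm Y\<^sub>n)\<^sup>2) \<le> (1 - 2 * a / N) powr (- N / 2)\<close> for \<open>a < N / 2\<close>, uniformly in \<open>n\<close>.
  The hypothesis on \<open>C\<close> forces \<open>2 / N < C\<^sup>2\<close>, so \<open>a = p / C\<^sup>2\<close> is admissible for some \<open>p > 1\<close>,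
  and a uniform bound on \<open>exp (p * (norm Y\<^sub>n)\<^sup>2 / C\<^sup>2)\<close> yields uniform integrability.\<close>

section \<open>Gaussian integrals\<close>

lemma nn_integral_std_normal_density:
  "(\<integral>\<^sup>+y. ennreal (std_normal_density y) \<partial>lborel) = 1"
  by (subst nn_integral_eq_integral) auto

lemma nn_integral_sq_std_normal_density:
  "(\<integral>\<^sup>+y. ennreal (y\<^sup>2 * std_normal_density y) \<partial>lborel) = 1"
proof -
  have "has_bochner_integral lborel (\<lambda>y. y\<^sup>2 * std_normal_density y) 1"
    using std_normal_moment_even[of 1] by (simp add: mult.commute)
  then show ?thesis
    by (subst nn_integral_eq_integral) (auto simp: has_bochner_integral_iff)
qed

lemma nn_integral_exp_mult_std_normal_density:
  "(\<integral>\<^sup>+y. ennreal (exp (t * y) * std_normal_density y) \<partial>lborel) = ennreal (exp (t\<^sup>2 / 2))"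
proof -
  have shift: "exp (t * y) * std_normal_density y = exp (t\<^sup>2 / 2) * std_normal_density (- t + y)" for y
  proof -
    have "t * y + - (y\<^sup>2 / 2) = t\<^sup>2 / 2 + - ((- t + y)\<^sup>2 / 2)"
      by (simp add: power2_eq_square field_simps)
    then show ?thesis by (simp add: std_normal_density_def exp_add[symmetric])
  qed
  have "(\<integral>\<^sup>+y. ennreal (std_normal_density (- t + y)) \<partial>lborel) = 1"
    using nn_integral_real_affine[of "\<lambda>y. ennreal (std_normal_density y)" 1 "- t"]
    by (simp add: nn_integral_std_normal_density)
  then show ?thesis
    by (simp add: shift ennreal_mult nn_integral_cmult)
qed

lemma nn_integral_exp_sq_std_normal_density:
  assumes "\<beta> < 1/2"
  shows "(\<integral>\<^sup>+y. ennreal (exp (\<beta> * y\<^sup>2) * std_normal_density y) \<partial>lborel)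
    = ennreal (1 / sqrt (1 - 2 * \<beta>))"
proof -
  define s where "s = sqrt (1 - 2 * \<beta>)"
  have s: "0 < s" "s\<^sup>2 = 1 - 2 * \<beta>"
    using assms by (simp_all add: s_def)
  have scale: "exp (\<beta> * y\<^sup>2) * std_normal_density y = std_normal_density (s * y)" for y
  proof -
    have "\<beta> * y\<^sup>2 + - (y\<^sup>2 / 2) = - ((s * y)\<^sup>2 / 2)"
      by (simp add: power_mult_distrib s(2) field_simps)
    then show ?thesis by (simp add: std_normal_density_def exp_add[symmetric])
  qed
  have "(\<integral>\<^sup>+y. ennreal (std_normal_density (s * y)) \<partial>lborel)
      = ennreal (1 / s) * (\<integral>\<^sup>+y. ennreal (std_normal_density (s * (0 + 1 / s * y))) \<partial>lborel)"
    using nn_integral_real_affine[of "\<lambda>y. ennreal (std_normal_density (s * y))" "1 / s" 0] s(1)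
    by simp
  also have "\<dots> = ennreal (1 / s)"
    using s(1) by (simp add: nn_integral_std_normal_density)
  finally show ?thesis by (simp add: scale s_def)
qed

definition gauss_density :: "'a::euclidean_space \<Rightarrow> real" where
  "gauss_density x = (\<Prod>b\<in>Basis. std_normal_density (x \<bullet> b))"

lemma gauss_density_nonneg: "0 \<le> gauss_density x"
  by (simp add: gauss_density_def prod_nonneg)

lemma borel_measurable_gauss_density [measurable]: "gauss_density \<in> borel_measurable borel"
  unfolding gauss_density_def by measurable

lemma norm_sq_eq_sum_Basis: "(norm x)\<^sup>2 = (\<Sum>b\<in>Basis. (x \<bullet> b)\<^sup>2)"
  unfolding power2_norm_eq_inner by (subst euclidean_inner) (simp add: power2_eq_square)

lemma gauss_density_eq:
  "gauss_density (x::'a::euclidean_space) = (1 / sqrt (2 * pi)) ^ DIM('a) * exp (- ((norm x)\<^sup>2 / 2))"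
proof -
  have "exp (- ((norm x)\<^sup>2 / 2)) = (\<Prod>b\<in>Basis. exp (- ((x \<bullet> b)\<^sup>2 / 2)))"
    by (simp add: norm_sq_eq_sum_Basis exp_sum[symmetric] sum_negf sum_divide_distrib)
  then show ?thesis
    by (simp add: gauss_density_def std_normal_density_def prod_dividef power_one_over)
qed

lemma nn_integral_gauss_density:
  "(\<integral>\<^sup>+x. ennreal (gauss_density (x::'a::euclidean_space)) \<partial>lborel) = 1"
proof -
  have "(\<integral>\<^sup>+x. ennreal (gauss_density (x::'a)) \<partial>lborel)
      = (\<integral>\<^sup>+x. (\<Prod>b\<in>Basis. ennreal (std_normal_density ((x::'a) \<bullet> b))) \<partial>lborel)"
    by (simp add: gauss_density_def prod_ennreal)
  also have "\<dots> = (\<Prod>b\<in>(Basis::'a set). \<integral>\<^sup>+y. ennreal (std_normal_density y) \<partial>lborel)"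
    by (rule nn_integral_lborel_prod) auto
  finally show ?thesis by (simp add: nn_integral_std_normal_density)
qed

lemma nn_integral_exp_inner_gauss_density:
  "(\<integral>\<^sup>+x. ennreal (exp (v \<bullet> x) * gauss_density (x::'a::euclidean_space)) \<partial>lborel)
    = ennreal (exp ((norm v)\<^sup>2 / 2))"
proof -
  have "exp (v \<bullet> x) * gauss_density x
      = (\<Prod>b\<in>Basis. exp ((v \<bullet> b) * (x \<bullet> b)) * std_normal_density (x \<bullet> b))" for x :: 'a
    by (simp add: gauss_density_def prod.distrib euclidean_inner[of v x] exp_sum)
  then have "(\<integral>\<^sup>+x. ennreal (exp (v \<bullet> x) * gauss_density (x::'a)) \<partial>lborel)
      = (\<integral>\<^sup>+x. (\<Prod>b\<in>Basis. ennreal (exp ((v \<bullet> b) * ((x::'a) \<bullet> b)) * std_normal_density (x \<bullet> b))) \<partial>lborel)"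
    by (simp add: prod_ennreal)
  also have "\<dots> = (\<Prod>b\<in>(Basis::'a set). ennreal (exp ((v \<bullet> b)\<^sup>2 / 2)))"
    by (subst nn_integral_lborel_prod) (auto simp: nn_integral_exp_mult_std_normal_density)
  also have "\<dots> = ennreal (exp ((norm v)\<^sup>2 / 2))"
    by (simp add: prod_ennreal exp_sum[symmetric] sum_divide_distrib norm_sq_eq_sum_Basis)
  finally show ?thesis .
qed

lemma nn_integral_exp_norm_sq_gauss_density:
  assumes "\<beta> < 1/2"
  shows "(\<integral>\<^sup>+x. ennreal (exp (\<beta> * (norm x)\<^sup>2) * gauss_density (x::'a::euclidean_space)) \<partial>lborel)
    = ennreal ((1 / sqrt (1 - 2 * \<beta>)) ^ DIM('a))"
proof -
  have "exp (\<beta> * (norm x)\<^sup>2) * gauss_density x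
      = (\<Prod>b\<in>Basis. exp (\<beta> * (x \<bullet> b)\<^sup>2) * std_normal_density (x \<bullet> b))" for x :: 'a
    by (simp add: norm_sq_eq_sum_Basis gauss_density_def prod.distrib exp_sum sum_distrib_left)
  then have "(\<integral>\<^sup>+x. ennreal (exp (\<beta> * (norm x)\<^sup>2) * gauss_density (x::'a)) \<partial>lborel)
      = (\<integral>\<^sup>+x. (\<Prod>b\<in>Basis. ennreal (exp (\<beta> * ((x::'a) \<bullet> b)\<^sup>2) * std_normal_density (x \<bullet> b))) \<partial>lborel)"
    by (simp add: prod_ennreal)
  also have "\<dots> = (\<Prod>b\<in>(Basis::'a set). ennreal (1 / sqrt (1 - 2 * \<beta>)))"
    by (subst nn_integral_lborel_prod) (auto simp: nn_integral_exp_sq_std_normal_density[OF assms])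
  finally show ?thesis
    using assms by (simp add: prod_ennreal ennreal_power)
qed

lemma nn_integral_sq_inner_Basis_gauss_density:
  assumes "c \<in> Basis"
  shows "(\<integral>\<^sup>+x. ennreal ((x \<bullet> c)\<^sup>2 * gauss_density (x::'a::euclidean_space)) \<partial>lborel) = 1"
proof -
  have "(x \<bullet> c)\<^sup>2 * gauss_density x
      = (\<Prod>b\<in>Basis. (if b = c then (x \<bullet> b)\<^sup>2 else 1) * std_normal_density (x \<bullet> b))" for x :: 'a
    using assms by (simp add: gauss_density_def prod.distrib prod.delta)
  then have "(\<integral>\<^sup>+x. ennreal ((x \<bullet> c)\<^sup>2 * gauss_density (x::'a)) \<partial>lborel)
      = (\<integral>\<^sup>+x. (\<Prod>b\<in>Basis. ennreal ((if b = c then ((x::'a) \<bullet> b)\<^sup>2 else 1)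
            * std_normal_density (x \<bullet> b))) \<partial>lborel)"
    by (simp add: prod_ennreal)
  also have "\<dots> = (\<Prod>b\<in>(Basis::'a set).
      \<integral>\<^sup>+y. ennreal ((if b = c then y\<^sup>2 else 1) * std_normal_density y) \<partial>lborel)"
    by (rule nn_integral_lborel_prod) auto
  also have "\<dots> = 1"
  proof (intro prod.neutral ballI)
    fix b :: 'a
    show "(\<integral>\<^sup>+y. ennreal ((if b = c then y\<^sup>2 else 1) * std_normal_density y) \<partial>lborel) = 1"
      by (cases "b = c") (simp_all add: nn_integral_std_normal_density nn_integral_sq_std_normal_density)
  qed
  finally show ?thesis .
qed

lemma nn_integral_norm_sq_gauss_density:
  "(\<integral>\<^sup>+x. ennreal ((norm x)\<^sup>2 * gauss_density (x::'a::euclidean_space)) \<partial>lborel) = DIM('a)"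
proof -
  have "ennreal ((norm x)\<^sup>2 * gauss_density x) = (\<Sum>c\<in>Basis. ennreal ((x \<bullet> c)\<^sup>2 * gauss_density x))"
    for x :: 'a
    by (simp add: norm_sq_eq_sum_Basis sum_distrib_right sum_ennreal gauss_density_nonneg)
  then have "(\<integral>\<^sup>+x. ennreal ((norm x)\<^sup>2 * gauss_density (x::'a)) \<partial>lborel)
      = (\<Sum>c\<in>(Basis::'a set). \<integral>\<^sup>+x. ennreal ((x \<bullet> c)\<^sup>2 * gauss_density x) \<partial>lborel)"
    by (simp add: nn_integral_sum)
  then show ?thesis
    by (simp add: nn_integral_sq_inner_Basis_gauss_density)
qed

text \<open>The tangent line of \<open>y \<mapsto> y ^ j\<close> at \<open>c\<close>, with the negative terms moved across.\<close>

lemma power_ge_tangent: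
  fixes y c :: real
  assumes "0 \<le> y" and "0 < c"
  shows "c ^ j + real j * c ^ (j - 1) * y \<le> y ^ j + real j * c ^ j"
proof -
  have "1 + real j * (y / c - 1) \<le> (1 + (y / c - 1)) ^ j"
    by (rule Bernoulli_inequality) (use assms in simp)
  then have "c ^ j * (1 + real j * (y / c - 1)) \<le> c ^ j * (y / c) ^ j"
    using assms by (intro mult_left_mono) auto
  moreover have "c ^ j * (y / c) ^ j = y ^ j"
    using assms by (simp add: power_divide)
  moreover have "c ^ j * (1 + real j * (y / c - 1)) = c ^ j + real j * c ^ (j - 1) * y - real j * c ^ j"
    using assms by (cases j) (simp_all add: field_simps)
  ultimately show ?thesis by linarith
qed

text \<open>Jensen's inequality for the convex function \<open>y \<mapsto> y ^ j\<close>, using that the second moment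
  of the Gaussian is \<open>DIM('a)\<close>.\<close>

lemma nn_integral_norm_power_gauss_density_ge:
  "ennreal (real DIM('a) ^ j)
    \<le> (\<integral>\<^sup>+x. ennreal ((norm x) ^ (2 * j) * gauss_density (x::'a::euclidean_space)) \<partial>lborel)"
proof -
  define c where "c = real DIM('a)"
  have c: "0 < c" by (simp add: c_def)
  let ?M = "\<integral>\<^sup>+x. ennreal ((norm x) ^ (2 * j) * gauss_density (x::'a)) \<partial>lborel"
  have tangent: "ennreal (c ^ j * gauss_density x) + ennreal (real j * c ^ (j - 1) * ((norm x)\<^sup>2 * gauss_density x))
      \<le> ennreal ((norm x) ^ (2 * j) * gauss_density x) + ennreal (real j * c ^ j * gauss_density x)"
    for x :: 'a
  proof -
    have "(c ^ j + real j * c ^ (j - 1) * (norm x)\<^sup>2) * gauss_density x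
        \<le> ((norm x) ^ (2 * j) + real j * c ^ j) * gauss_density x"
      using power_ge_tangent[of "(norm x)\<^sup>2" c j] c
      by (intro mult_right_mono) (auto simp: power_mult gauss_density_nonneg)
    then show ?thesis
      using c gauss_density_nonneg[of x]
      by (simp add: algebra_simps ennreal_plus[symmetric] del: ennreal_plus)
  qed
  have second_moment: "(\<integral>\<^sup>+x. ennreal ((norm x)\<^sup>2) * ennreal (gauss_density (x::'a)) \<partial>lborel) = ennreal c"
    using nn_integral_norm_sq_gauss_density[where 'a='a]
    by (simp add: ennreal_mult gauss_density_nonneg c_def ennreal_of_nat_eq_real_of_nat)
  have "ennreal (real j * c ^ (j - 1)) * ennreal c = ennreal (real j * c ^ j)"
    using c by (cases j) (simp_all add: ennreal_mult[symmetric])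
  then have "ennreal (c ^ j) + ennreal (real j * c ^ j)
      = (\<integral>\<^sup>+x. ennreal (c ^ j * gauss_density (x::'a))
          + ennreal (real j * c ^ (j - 1) * ((norm x)\<^sup>2 * gauss_density x)) \<partial>lborel)"
    using c by (subst nn_integral_add)
      (auto simp: ennreal_mult nn_integral_cmult nn_integral_gauss_density gauss_density_nonneg
        second_moment)
  also have "\<dots> \<le> (\<integral>\<^sup>+x. ennreal ((norm x) ^ (2 * j) * gauss_density (x::'a))
      + ennreal (real j * c ^ j * gauss_density x) \<partial>lborel)"
    by (rule nn_integral_mono) (rule tangent)
  also have "\<dots> = ?M + ennreal (real j * c ^ j)"
    using c by (subst nn_integral_add)
      (auto simp: ennreal_mult nn_integral_cmult nn_integral_gauss_density gauss_density_nonneg)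
  finally have "ennreal (real j * c ^ j) + ennreal (c ^ j) \<le> ennreal (real j * c ^ j) + ?M"
    by (simp add: add.commute)
  then show ?thesis
    unfolding c_def by (simp add: ennreal_add_left_cancel_le)
qed

section \<open>Polar decomposition of Lebesgue measure\<close>

lemma sets_sphere_unif [simp, measurable_cong]:
  "sets (sphere_unif :: 'a::euclidean_space measure) = sets borel"
  by (simp add: sphere_unif_def)

lemma emeasure_lborel_eq_scaleR_vimage:
  fixes S :: "'a::euclidean_space set"
  assumes "0 < r" and "S \<in> sets borel"
  shows "emeasure lborel S = ennreal (r ^ DIM('a)) * emeasure lborel ((\<lambda>x. r *\<^sub>R x) -` S)"
proof -
  have "lborel = density (distr lborel borel (\<lambda>x. (0::'a) + r *\<^sub>R x)) (\<lambda>_. \<bar>r\<bar> ^ DIM('a))"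
    using lborel_affine[of r "0::'a"] assms(1) by simp
  then have "emeasure lborel S
      = emeasure (density (distr lborel borel (\<lambda>x. (0::'a) + r *\<^sub>R x)) (\<lambda>_. \<bar>r\<bar> ^ DIM('a))) S"
    by simp
  then show ?thesis
    using assms by (simp add: emeasure_density_const emeasure_distr)
qed

text \<open>Cones are invariant under dilations, so a cone fills the same fraction of every ball.\<close>

lemma emeasure_cone_inter_ball:
  fixes A :: "'a::euclidean_space set"
  assumes A: "A \<in> sets borel"
  shows "emeasure lborel ({x. x /\<^sub>R norm x \<in> A} \<inter> ball 0 r)
    = emeasure sphere_unif A * emeasure lborel (ball (0::'a) r)"
proof (cases "0 < r")
  case False
  then show ?thesis by (simp add: ball_empty)
next
  case True
  let ?S = "\<lambda>r. {x::'a. x /\<^sub>R norm x \<in> A} \<inter> ball 0 r"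
  have "(\<lambda>x. r *\<^sub>R x) -` ?S r = ?S 1"
    using True by (auto simp: sgn_div_norm[symmetric] sgn_scaleR)
  then have scale: "emeasure lborel (?S r) = ennreal (r ^ DIM('a)) * emeasure lborel (?S 1)"
    using emeasure_lborel_eq_scaleR_vimage[OF True, of "?S r"] A by simp
  have "(\<lambda>x. r *\<^sub>R x) -` ball (0::'a) r = ball 0 1"
    using True by auto
  then have scale_ball: "emeasure lborel (ball (0::'a) r) = ennreal (r ^ DIM('a)) * emeasure lborel (ball (0::'a) 1)"
    using emeasure_lborel_eq_scaleR_vimage[OF True, of "ball (0::'a) r"] by simp
  have "(\<lambda>x::'a. x /\<^sub>R norm x) -` A \<inter> space (uniform_measure lborel (ball 0 1)) = {x. x /\<^sub>R norm x \<in> A}"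
    by auto
  then have "emeasure sphere_unif A = emeasure lborel (?S 1) / emeasure lborel (ball (0::'a) 1)"
    using A unfolding sphere_unif_def
    by (subst emeasure_distr) (auto intro!: emeasure_uniform_measure[THEN trans] simp: Int_commute)
  moreover have "emeasure lborel (ball (0::'a) 1) \<noteq> 0" "emeasure lborel (ball (0::'a) 1) < \<infinity>"
    using emeasure_lborel_ball_finite[of "0::'a" 1] unit_ball_vol_pos[of "real DIM('a)"]
    by (auto simp: emeasure_ball simp del: unit_ball_vol_pos)
  ultimately have "emeasure lborel (?S 1) = emeasure sphere_unif A * emeasure lborel (ball (0::'a) 1)"
    by (simp add: ennreal_divide_times ennreal_divide_self)
  then show ?thesis
    by (simp add: scale scale_ball mult_ac)
qed

lemma distr_norm_density_cone:
  fixes A :: "'a::euclidean_space set"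
  assumes A: "A \<in> sets borel"
  shows "distr (density lborel (indicator {x::'a. x /\<^sub>R norm x \<in> A})) borel norm
    = density (distr (lborel :: 'a measure) borel norm) (\<lambda>_. emeasure sphere_unif A)"
    (is "?L = ?R")
proof (rule measure_eqI_generator_eq[where \<Omega>=UNIV and E="range lessThan" and A="\<lambda>i. {..<real i}"])
  let ?S = "{x::'a. x /\<^sub>R norm x \<in> A}"
  have [measurable]: "?S \<in> sets borel"
    using A by measurable
  have ball: "norm -` {..<r} = ball (0::'a) r" for r
    by auto
  have L: "emeasure ?L {..<r} = emeasure lborel (?S \<inter> ball 0 r)" for r
    by (simp add: emeasure_distr emeasure_restricted ball)
  show "emeasure ?L X = emeasure ?R X" if "X \<in> range lessThan" for X
    using that A by (auto simp: L emeasure_cone_inter_ball emeasure_density_const emeasure_distr ball)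
  show "emeasure ?L {..<real i} \<noteq> \<infinity>" for i
  proof -
    have "emeasure lborel (?S \<inter> ball 0 (real i)) \<le> emeasure lborel (ball (0::'a) (real i))"
      by (intro emeasure_mono) auto
    then show ?thesis
      using emeasure_lborel_ball_finite[of "0::'a" "real i"] by (auto simp: L top_unique)
  qed
  show "sets ?L = sigma_sets UNIV (range lessThan)" "sets ?R = sigma_sets UNIV (range lessThan)"
    unfolding borel_Iio by simp_all
qed (auto simp: Int_stable_def greaterThan_Int_greaterThan intro: reals_Archimedean2)

lemma nn_integral_lborel_polar:
  fixes \<phi> :: "'a::euclidean_space \<Rightarrow> ennreal" and h :: "real \<Rightarrow> ennreal"
  assumes [measurable]: "\<phi> \<in> borel_measurable borel" "h \<in> borel_measurable borel"
  shows "(\<integral>\<^sup>+x. \<phi> (x /\<^sub>R norm x) * h (norm x) \<partial>lborel)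
    = (\<integral>\<^sup>+u. \<phi> u \<partial>sphere_unif) * (\<integral>\<^sup>+x. h (norm (x::'a)) \<partial>lborel)"
proof -
  let ?H = "\<integral>\<^sup>+x. h (norm (x::'a)) \<partial>lborel"
  let ?D = "distr (density lborel (\<lambda>x. h (norm (x::'a)))) borel (\<lambda>x. x /\<^sub>R norm x)"
  have "?D = density sphere_unif (\<lambda>_. ?H)"
  proof (rule measure_eqI)
    fix A assume "A \<in> sets ?D"
    then have A[measurable]: "A \<in> sets borel" by simp
    let ?S = "{x::'a. x /\<^sub>R norm x \<in> A}"
    have "emeasure ?D A = (\<integral>\<^sup>+x. indicator ?S x * h (norm x) \<partial>lborel)"
      by (simp add: emeasure_distr emeasure_density vimage_def mult.commute)
    also have "\<dots> = (\<integral>\<^sup>+r. h r \<partial>distr (density lborel (indicator ?S)) borel norm)"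
      by (simp add: nn_integral_distr nn_integral_density)
    also have "\<dots> = emeasure sphere_unif A * ?H"
      by (simp add: distr_norm_density_cone[OF A] nn_integral_density nn_integral_distr
          nn_integral_cmult)
    finally show "emeasure ?D A = emeasure (density sphere_unif (\<lambda>_. ?H)) A"
      by (simp add: emeasure_density_const mult.commute)
  qed simp
  then have "(\<integral>\<^sup>+u. \<phi> u \<partial>?D) = (\<integral>\<^sup>+u. \<phi> u * ?H \<partial>sphere_unif)"
    by (simp add: nn_integral_density mult.commute)
  then show ?thesis
    by (simp add: nn_integral_distr nn_integral_density nn_integral_multc mult.commute)
qed

section \<open>The uniform distribution on the sphere\<close>

lemma nn_integral_lborel_uminus:
  fixes f :: "'a::euclidean_space \<Rightarrow> ennreal"
  assumes [measurable]: "f \<in> borel_measurable borel"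
  shows "(\<integral>\<^sup>+x. f (- x) \<partial>lborel) = (\<integral>\<^sup>+x. f x \<partial>lborel)"
proof -
  have "lborel = density (distr lborel borel (\<lambda>x. (0::'a) + (-1) *\<^sub>R x)) (\<lambda>_. \<bar>-1::real\<bar> ^ DIM('a))"
    using lborel_affine[of "-1::real" "0::'a"] by simp
  then have "(\<integral>\<^sup>+x. f x \<partial>lborel)
      = (\<integral>\<^sup>+x. f x \<partial>density (distr lborel borel (\<lambda>x. (0::'a) + (-1) *\<^sub>R x)) (\<lambda>_. \<bar>-1::real\<bar> ^ DIM('a)))"
    by simp
  then show ?thesis
    by (simp add: nn_integral_density nn_integral_distr)
qed

lemma nn_integral_sphere_unif_eq_gauss:
  fixes \<phi> :: "'a::euclidean_space \<Rightarrow> ennreal"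
  assumes [measurable]: "\<phi> \<in> borel_measurable borel"
  shows "(\<integral>\<^sup>+u. \<phi> u \<partial>sphere_unif) = (\<integral>\<^sup>+x. \<phi> (x /\<^sub>R norm x) * ennreal (gauss_density x) \<partial>lborel)"
proof -
  let ?h = "\<lambda>r. ennreal ((1 / sqrt (2 * pi)) ^ DIM('a) * exp (- (r\<^sup>2 / 2)))"
  have "(\<integral>\<^sup>+x. \<phi> (x /\<^sub>R norm x) * ?h (norm x) \<partial>lborel)
      = (\<integral>\<^sup>+u. \<phi> u \<partial>sphere_unif) * (\<integral>\<^sup>+x. ?h (norm (x::'a)) \<partial>lborel)"
    by (rule nn_integral_lborel_polar) auto
  then show ?thesis
    by (simp add: gauss_density_eq[symmetric] nn_integral_gauss_density)
qed

lemma nn_integral_sphere_unif_reflect: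
  fixes \<phi> :: "'a::euclidean_space \<Rightarrow> ennreal"
  assumes [measurable]: "\<phi> \<in> borel_measurable borel"
  shows "(\<integral>\<^sup>+u. \<phi> (- u) \<partial>sphere_unif) = (\<integral>\<^sup>+u. \<phi> u \<partial>sphere_unif)"
proof -
  have "(\<integral>\<^sup>+u. \<phi> (- u) \<partial>sphere_unif)
      = (\<integral>\<^sup>+x. (\<lambda>x. \<phi> (x /\<^sub>R norm x) * ennreal (gauss_density x)) (- x) \<partial>lborel)"
    by (simp add: nn_integral_sphere_unif_eq_gauss gauss_density_eq)
  also have "\<dots> = (\<integral>\<^sup>+x. \<phi> (x /\<^sub>R norm x) * ennreal (gauss_density (x::'a)) \<partial>lborel)"
    by (rule nn_integral_lborel_uminus) measurable
  finally show ?thesis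
    by (simp add: nn_integral_sphere_unif_eq_gauss)
qed

lemma nn_integral_power_inner_sphere_unif_le:
  fixes v :: "'a::euclidean_space"
  shows "ennreal (real DIM('a) ^ j) * (\<integral>\<^sup>+u. ennreal ((v \<bullet> u) ^ (2 * j)) \<partial>sphere_unif)
    \<le> (\<integral>\<^sup>+x. ennreal ((v \<bullet> x) ^ (2 * j) * gauss_density x) \<partial>lborel)"
proof -
  let ?h = "\<lambda>r. ennreal (r ^ (2 * j) * ((1 / sqrt (2 * pi)) ^ DIM('a) * exp (- (r\<^sup>2 / 2))))"
  have "ennreal ((v \<bullet> x) ^ (2 * j) * gauss_density x)
      = ennreal ((v \<bullet> (x /\<^sub>R norm x)) ^ (2 * j)) * ?h (norm x)" for x :: 'a
  proof (cases "x = 0")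
    case False
    then have "v \<bullet> x = (v \<bullet> (x /\<^sub>R norm x)) * norm x"
      by simp
    then have "(v \<bullet> x) ^ (2 * j) = (v \<bullet> (x /\<^sub>R norm x)) ^ (2 * j) * (norm x) ^ (2 * j)"
      by (metis power_mult_distrib)
    then show ?thesis
      by (simp add: gauss_density_eq ennreal_mult'[OF zero_le_even_power] mult.assoc)
  qed (cases j, simp_all add: gauss_density_eq)
  then have "(\<integral>\<^sup>+x. ennreal ((v \<bullet> x) ^ (2 * j) * gauss_density x) \<partial>lborel)
      = (\<integral>\<^sup>+u. ennreal ((v \<bullet> u) ^ (2 * j)) \<partial>sphere_unif) * (\<integral>\<^sup>+x. ?h (norm (x::'a)) \<partial>lborel)"
    by (simp only:) (rule nn_integral_lborel_polar, auto)
  also have "(\<integral>\<^sup>+x. ?h (norm (x::'a)) \<partial>lborel)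
      = (\<integral>\<^sup>+x. ennreal ((norm x) ^ (2 * j) * gauss_density (x::'a)) \<partial>lborel)"
    by (simp add: gauss_density_eq)
  finally have "(\<integral>\<^sup>+x. ennreal ((v \<bullet> x) ^ (2 * j) * gauss_density x) \<partial>lborel)
      = (\<integral>\<^sup>+x. ennreal ((norm x) ^ (2 * j) * gauss_density (x::'a)) \<partial>lborel)
        * (\<integral>\<^sup>+u. ennreal ((v \<bullet> u) ^ (2 * j)) \<partial>sphere_unif)"
    by (simp only: mult.commute)
  then show ?thesis
    by (simp only:) (intro mult_right_mono nn_integral_norm_power_gauss_density_ge zero_le)
qed

lemma cosh_sums_even_powers: "(\<lambda>j. t ^ (2 * j) / fact (2 * j)) sums cosh (t::real)"
proof -
  have "(\<lambda>j. (\<lambda>n. if even n then t ^ n /\<^sub>R fact n else 0) (2 * j)) sums cosh t"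
    by (subst sums_mono_reindex) (auto simp: strict_mono_def cosh_converges elim!: oddE)
  then show ?thesis
    by (simp add: divide_inverse mult.commute)
qed

lemma ennreal_cosh_mult_eq_suminf:
  assumes "0 \<le> g"
  shows "ennreal (cosh t * g) = (\<Sum>j. ennreal (t ^ (2 * j) / fact (2 * j) * g))"
  using sums_mult2[OF cosh_sums_even_powers[of t], of g] assms
  by (intro suminf_ennreal_eq[symmetric]) (auto simp: zero_le_even_power)

lemma ennreal_cosh_mult_eq_average:
  assumes "0 \<le> g"
  shows "ennreal (cosh t * g) = (ennreal (exp t * g) + ennreal (exp (- t) * g)) / 2"
proof -
  have "cosh t * g = (exp t * g + exp (- t) * g) / 2"
    by (simp add: cosh_def field_simps)
  then have "ennreal (cosh t * g) = ennreal ((exp t * g + exp (- t) * g) / 2)"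
    by (simp only:)
  also have "\<dots> = ennreal (exp t * g + exp (- t) * g) / 2"
    by (rule ennreal_divide_numeral[symmetric]) (use assms in simp)
  also have "ennreal (exp t * g + exp (- t) * g) = ennreal (exp t * g) + ennreal (exp (- t) * g)"
    using assms by (intro ennreal_plus) auto
  finally show ?thesis .
qed

lemma ennreal_average_self: "((a::ennreal) + a) / 2 = a"
  by (simp add: mult_2[symmetric] ennreal_mult_divide_eq mult.commute)

lemma nn_integral_cosh_inner_gauss_density:
  "(\<integral>\<^sup>+x. ennreal (cosh (v \<bullet> x) * gauss_density (x::'a::euclidean_space)) \<partial>lborel)
    = ennreal (exp ((norm v)\<^sup>2 / 2))"
proof -
  have "(\<integral>\<^sup>+x. ennreal (cosh (v \<bullet> x) * gauss_density (x::'a)) \<partial>lborel)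
      = ((\<integral>\<^sup>+x. ennreal (exp (v \<bullet> x) * gauss_density (x::'a)) \<partial>lborel)
        + (\<integral>\<^sup>+x. ennreal (exp ((- v) \<bullet> x) * gauss_density (x::'a)) \<partial>lborel)) / 2"
    by (simp add: ennreal_cosh_mult_eq_average gauss_density_nonneg nn_integral_divide nn_integral_add)
  then show ?thesis
    by (simp add: nn_integral_exp_inner_gauss_density[of "- v", simplified]
        nn_integral_exp_inner_gauss_density ennreal_average_self)
qed

text \<open>Comparing the even moments of \<open>v \<bullet> u\<close> term by term in the power series of \<open>cosh\<close>,
  the sphere is dominated by the Gaussian after rescaling by \<open>sqrt DIM('a)\<close>.\<close>

lemma nn_integral_cosh_inner_sphere_unif_le:
  fixes v :: "'a::euclidean_space"
  shows "(\<integral>\<^sup>+u. ennreal (cosh (sqrt (real DIM('a)) * (v \<bullet> u))) \<partial>sphere_unif)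
    \<le> ennreal (exp ((norm v)\<^sup>2 / 2))"
proof -
  let ?t = "\<lambda>j t. ennreal (t ^ (2 * j) / fact (2 * j))"
  have term_le: "(\<integral>\<^sup>+u. ?t j (sqrt (real DIM('a)) * (v \<bullet> u)) \<partial>sphere_unif)
      \<le> (\<integral>\<^sup>+x. ennreal ((v \<bullet> x) ^ (2 * j) / fact (2 * j) * gauss_density (x::'a)) \<partial>lborel)" for j
  proof -
    let ?f = "ennreal (1 / fact (2 * j))"
    have "(\<integral>\<^sup>+u. ?t j (sqrt (real DIM('a)) * (v \<bullet> u)) \<partial>sphere_unif)
        = (\<integral>\<^sup>+u. ?f * (ennreal (real DIM('a) ^ j) * ennreal ((v \<bullet> u) ^ (2 * j))) \<partial>sphere_unif)"
    proof (rule nn_integral_cong)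
      fix u :: 'a
      have "(sqrt (real DIM('a)) * (v \<bullet> u)) ^ (2 * j) / fact (2 * j)
          = 1 / fact (2 * j) * (real DIM('a) ^ j * (v \<bullet> u) ^ (2 * j))"
        by (simp add: power_mult_distrib power_mult)
      then show "?t j (sqrt (real DIM('a)) * (v \<bullet> u))
          = ?f * (ennreal (real DIM('a) ^ j) * ennreal ((v \<bullet> u) ^ (2 * j)))"
        by (simp only: ennreal_mult zero_le_even_power zero_le_power of_nat_0_le_iff
            mult_nonneg_nonneg zero_le_divide_1_iff fact_ge_zero even_mult_iff dvd_refl simp_thms)
    qed
    also have "\<dots> = ?f * (ennreal (real DIM('a) ^ j) * (\<integral>\<^sup>+u. ennreal ((v \<bullet> u) ^ (2 * j)) \<partial>sphere_unif))"
      by (simp add: nn_integral_cmult)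
    also have "\<dots> \<le> ?f * (\<integral>\<^sup>+x. ennreal ((v \<bullet> x) ^ (2 * j) * gauss_density (x::'a)) \<partial>lborel)"
      by (intro mult_left_mono nn_integral_power_inner_sphere_unif_le) simp
    also have "\<dots> = (\<integral>\<^sup>+x. ?f * ennreal ((v \<bullet> x) ^ (2 * j) * gauss_density (x::'a)) \<partial>lborel)"
      by (rule nn_integral_cmult[symmetric]) simp
    also have "\<dots> = (\<integral>\<^sup>+x. ennreal ((v \<bullet> x) ^ (2 * j) / fact (2 * j) * gauss_density (x::'a)) \<partial>lborel)"
    proof (rule nn_integral_cong)
      fix x :: 'a
      have eq: "(v \<bullet> x) ^ (2 * j) / fact (2 * j) * gauss_density x
          = 1 / fact (2 * j) * ((v \<bullet> x) ^ (2 * j) * gauss_density x)"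
        by simp
      have "0 \<le> (v \<bullet> x) ^ (2 * j) * gauss_density x"
        by (simp add: zero_le_even_power gauss_density_nonneg)
      then have "ennreal (1 / fact (2 * j) * ((v \<bullet> x) ^ (2 * j) * gauss_density x))
          = ?f * ennreal ((v \<bullet> x) ^ (2 * j) * gauss_density x)"
        by (intro ennreal_mult) simp_all
      then show "?f * ennreal ((v \<bullet> x) ^ (2 * j) * gauss_density x)
          = ennreal ((v \<bullet> x) ^ (2 * j) / fact (2 * j) * gauss_density x)"
        by (simp only: eq)
    qed
    finally show ?thesis .
  qed
  have cosh_series: "ennreal (cosh t) = (\<Sum>j. ?t j t)" for t
    using cosh_sums_even_powers[of t] by (intro suminf_ennreal_eq[symmetric]) (auto simp: zero_le_even_power)
  have "(\<integral>\<^sup>+u. ennreal (cosh (sqrt (real DIM('a)) * (v \<bullet> u))) \<partial>sphere_unif)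
      = (\<Sum>j. \<integral>\<^sup>+u. ?t j (sqrt (real DIM('a)) * (v \<bullet> u)) \<partial>sphere_unif)"
    unfolding cosh_series by (rule nn_integral_suminf) measurable
  also have "\<dots> \<le> (\<Sum>j. \<integral>\<^sup>+x. ennreal ((v \<bullet> x) ^ (2 * j) / fact (2 * j) * gauss_density (x::'a)) \<partial>lborel)"
    by (intro suminf_le term_le summableI)
  also have "\<dots> = (\<integral>\<^sup>+x. (\<Sum>j. ennreal ((v \<bullet> x) ^ (2 * j) / fact (2 * j) * gauss_density (x::'a))) \<partial>lborel)"
    by (rule nn_integral_suminf[symmetric]) measurable
  also have "\<dots> = (\<integral>\<^sup>+x. ennreal (cosh (v \<bullet> x) * gauss_density (x::'a)) \<partial>lborel)"
    by (simp add: ennreal_cosh_mult_eq_suminf gauss_density_nonneg)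
  finally show ?thesis
    by (simp only: nn_integral_cosh_inner_gauss_density)
qed

lemma nn_integral_exp_inner_sphere_unif_le:
  fixes w :: "'a::euclidean_space"
  shows "(\<integral>\<^sup>+u. ennreal (exp (w \<bullet> u)) \<partial>sphere_unif) \<le> ennreal (exp ((norm w)\<^sup>2 / (2 * real DIM('a))))"
proof -
  define c where "c = sqrt (real DIM('a))"
  have c: "0 < c" "c\<^sup>2 = real DIM('a)"
    by (simp_all add: c_def)
  have "(\<integral>\<^sup>+u. ennreal (exp (- (w \<bullet> u))) \<partial>sphere_unif) = (\<integral>\<^sup>+u. ennreal (exp (w \<bullet> u)) \<partial>sphere_unif)"
    using nn_integral_sphere_unif_reflect[of "\<lambda>u. ennreal (exp (w \<bullet> u))"] by simp
  then have "(\<integral>\<^sup>+u. ennreal (exp (w \<bullet> u)) \<partial>sphere_unif)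
      = (\<integral>\<^sup>+u. ennreal (cosh (w \<bullet> u)) \<partial>sphere_unif)"
    using ennreal_cosh_mult_eq_average[of 1]
    by (simp add: nn_integral_divide nn_integral_add ennreal_average_self)
  also have "\<dots> = (\<integral>\<^sup>+u. ennreal (cosh (c * ((w /\<^sub>R c) \<bullet> u))) \<partial>sphere_unif)"
    using c(1) by (simp add: field_simps)
  also have "\<dots> \<le> ennreal (exp ((norm (w /\<^sub>R c))\<^sup>2 / 2))"
    unfolding c_def by (rule nn_integral_cosh_inner_sphere_unif_le)
  also have "\<dots> = ennreal (exp ((norm w)\<^sup>2 / (2 * real DIM('a))))"
    using c by (simp add: field_simps)
  finally show ?thesis .
qed

section \<open>Exponential square moments of normalized sums\<close>

lemma (in prob_space) nn_integral_exp_inner_normalized_sum_le: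
  fixes X :: "nat \<Rightarrow> 'a \<Rightarrow> 'b::euclidean_space"
  assumes indep: "indep_vars (\<lambda>_. borel) X {1..n}"
    and mgf: "\<And>j w. j \<in> {1..n} \<Longrightarrow>
      (\<integral>\<^sup>+\<omega>. ennreal (exp (w \<bullet> X j \<omega>)) \<partial>M) \<le> ennreal (exp (c * (norm w)\<^sup>2))"
    and "0 \<le> c"
  shows "(\<integral>\<^sup>+\<omega>. ennreal (exp (w \<bullet> (\<Sum>j\<in>{1..n}. (1 / sqrt (real n)) *\<^sub>R X j \<omega>))) \<partial>M)
    \<le> ennreal (exp (c * (norm w)\<^sup>2))"
proof -
  define v where "v = (1 / sqrt (real n)) *\<^sub>R w"
  have "indep_vars (\<lambda>_. borel) (\<lambda>j \<omega>. ennreal (exp (v \<bullet> X j \<omega>))) {1..n}"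
    by (rule indep_vars_compose2[OF indep]) measurable
  moreover have "(\<integral>\<^sup>+\<omega>. ennreal (exp (w \<bullet> (\<Sum>j\<in>{1..n}. (1 / sqrt (real n)) *\<^sub>R X j \<omega>))) \<partial>M)
      = (\<integral>\<^sup>+\<omega>. (\<Prod>j\<in>{1..n}. ennreal (exp (v \<bullet> X j \<omega>))) \<partial>M)"
    by (simp add: v_def inner_sum_right exp_sum prod_ennreal)
  ultimately have "(\<integral>\<^sup>+\<omega>. ennreal (exp (w \<bullet> (\<Sum>j\<in>{1..n}. (1 / sqrt (real n)) *\<^sub>R X j \<omega>))) \<partial>M)
      = (\<Prod>j\<in>{1..n}. \<integral>\<^sup>+\<omega>. ennreal (exp (v \<bullet> X j \<omega>)) \<partial>M)"
    by (simp add: indep_vars_nn_integral)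
  also have "\<dots> \<le> (\<Prod>j\<in>{1..n}. ennreal (exp (c * (norm v)\<^sup>2)))"
    by (intro prod_mono_ennreal mgf)
  also have "\<dots> = ennreal (exp (real n * (c * (norm v)\<^sup>2)))"
    by (simp add: exp_of_nat_mult ennreal_power)
  also have "\<dots> \<le> ennreal (exp (c * (norm w)\<^sup>2))"
    using \<open>0 \<le> c\<close> by (cases "n = 0") (simp_all add: v_def power_mult_distrib power_divide)
  finally show ?thesis .
qed

text \<open>\<open>exp (a * (norm y)\<^sup>2)\<close> is the Gaussian moment generating function at \<open>sqrt (2 * a) *\<^sub>R y\<close>;
  after exchanging the integrals, the bound on the moment generating function of \<open>Y\<close> leaves
  a Gaussian integral.\<close>

lemma nn_integral_exp_norm_sq_le_of_mgf_le:
  fixes Y :: "'b \<Rightarrow> 'a::euclidean_space"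
  assumes "sigma_finite_measure M" and [measurable]: "Y \<in> borel_measurable M"
    and mgf: "\<And>w. (\<integral>\<^sup>+\<omega>. ennreal (exp (w \<bullet> Y \<omega>)) \<partial>M) \<le> ennreal (exp (c * (norm w)\<^sup>2))"
    and "0 \<le> a" and "4 * a * c < 1"
  shows "(\<integral>\<^sup>+\<omega>. ennreal (exp (a * (norm (Y \<omega>))\<^sup>2)) \<partial>M)
    \<le> ennreal ((1 / sqrt (1 - 4 * a * c)) ^ DIM('a))"
proof -
  interpret sigma_finite_measure M by fact
  interpret pair_sigma_finite M "lborel :: 'a measure" ..
  define s where "s = sqrt (2 * a)"
  have s: "s\<^sup>2 = 2 * a"
    using \<open>0 \<le> a\<close> by (simp add: s_def)
  have "ennreal (exp (a * (norm (Y \<omega>))\<^sup>2))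
      = (\<integral>\<^sup>+g. ennreal (gauss_density g) * ennreal (exp ((s *\<^sub>R g) \<bullet> Y \<omega>)) \<partial>lborel)" for \<omega>
    using nn_integral_exp_inner_gauss_density[of "s *\<^sub>R Y \<omega>"]
    by (simp add: power_mult_distrib s ennreal_mult'[symmetric] gauss_density_nonneg mult.commute
        inner_commute)
  then have "(\<integral>\<^sup>+\<omega>. ennreal (exp (a * (norm (Y \<omega>))\<^sup>2)) \<partial>M)
      = (\<integral>\<^sup>+g. ennreal (gauss_density g) * (\<integral>\<^sup>+\<omega>. ennreal (exp ((s *\<^sub>R g) \<bullet> Y \<omega>)) \<partial>M) \<partial>lborel)"
    by (simp add: Fubini'[symmetric] nn_integral_cmult)
  also have "\<dots> \<le> (\<integral>\<^sup>+g. ennreal (gauss_density g) * ennreal (exp (c * (norm (s *\<^sub>R (g::'a)))\<^sup>2)) \<partial>lborel)"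
    by (intro nn_integral_mono mult_left_mono mgf) simp
  also have "\<dots> = (\<integral>\<^sup>+g. ennreal (exp ((2 * a * c) * (norm g)\<^sup>2) * gauss_density (g::'a)) \<partial>lborel)"
    by (simp add: ennreal_mult'[symmetric] gauss_density_nonneg power_mult_distrib s mult_ac)
  also have "\<dots> = ennreal ((1 / sqrt (1 - 2 * (2 * a * c))) ^ DIM('a))"
    by (rule nn_integral_exp_norm_sq_gauss_density) (use \<open>4 * a * c < 1\<close> in simp)
  finally show ?thesis
    by (simp add: mult.assoc)
qed

section \<open>Uniform integrability\<close>

text \<open>Above the level \<open>exp L\<close> we have \<open>exp (s i) \<le> exp (- (p - 1) * L) * exp (p * s i)\<close>, so the
  tails are uniformly small.\<close>

lemma uniformly_integrable_exp:
  fixes s :: "'i \<Rightarrow> 'a \<Rightarrow> real"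
  assumes [measurable]: "\<And>i. s i \<in> borel_measurable M"
    and nonneg: "\<And>i x. 0 \<le> s i x" and "1 < p"
    and bound: "\<And>i. (\<integral>\<^sup>+x. ennreal (exp (p * s i x)) \<partial>M) \<le> ennreal B"
  shows "uniformly_integrable M (\<lambda>i x. exp (s i x))"
proof -
  define B' where "B' = max B 1"
  have B': "0 < B'" "(\<integral>\<^sup>+x. ennreal (exp (p * s i x)) \<partial>M) \<le> ennreal B'" for i
    using bound[of i] by (simp_all add: B'_def order_trans[OF _ ennreal_leI])
  have integrable: "integrable M (\<lambda>x. exp (s i x))" for i
  proof (rule integrableI_bounded)
    have "exp (s i x) \<le> exp (p * s i x)" for x
      using nonneg[of i x] \<open>1 < p\<close> by (simp add: mult_le_cancel_right1)
    then have "(\<integral>\<^sup>+x. ennreal (norm (exp (s i x))) \<partial>M) \<le> ennreal B'"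
      by (intro order_trans[OF nn_integral_mono B'(2)]) (simp add: ennreal_leI)
    then show "(\<integral>\<^sup>+x. ennreal (norm (exp (s i x))) \<partial>M) < \<infinity>"
      using ennreal_less_top[of B'] unfolding infinity_ennreal_def by (rule le_less_trans)
  qed simp
  have tail: "(\<integral>\<^sup>+x. ennreal (indicator {y. exp L < \<bar>exp (s i y)\<bar>} x * \<bar>exp (s i x)\<bar>) \<partial>M)
      \<le> ennreal (exp (- ((p - 1) * L)) * B')" for i L
  proof -
    have "ennreal (indicator {y. exp L < \<bar>exp (s i y)\<bar>} x * \<bar>exp (s i x)\<bar>)
        \<le> ennreal (exp (- ((p - 1) * L))) * ennreal (exp (p * s i x))" for x
    proof (cases "L < s i x")
      case True
      then have "(p - 1) * L \<le> (p - 1) * s i x"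
        using \<open>1 < p\<close> by (intro mult_left_mono) auto
      then have "exp (s i x) \<le> exp (- ((p - 1) * L) + p * s i x)"
        by (simp add: algebra_simps)
      then show ?thesis
        using True by (simp add: ennreal_mult[symmetric] exp_add[symmetric])
    qed simp
    then have "(\<integral>\<^sup>+x. ennreal (indicator {y. exp L < \<bar>exp (s i y)\<bar>} x * \<bar>exp (s i x)\<bar>) \<partial>M)
        \<le> ennreal (exp (- ((p - 1) * L))) * (\<integral>\<^sup>+x. ennreal (exp (p * s i x)) \<partial>M)"
      by (subst nn_integral_cmult[symmetric]) (simp_all add: nn_integral_mono)
    also have "\<dots> \<le> ennreal (exp (- ((p - 1) * L))) * ennreal B'"
      by (intro mult_left_mono B'(2)) simp
    finally show ?thesis
      using B'(1) by (simp add: ennreal_mult)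
  qed
  have small_tail: "\<exists>K. \<forall>i. (\<integral>\<^sup>+x. ennreal (indicator {y. K < \<bar>exp (s i y)\<bar>} x * \<bar>exp (s i x)\<bar>) \<partial>M) < ennreal e"
    if "0 < e" for e
  proof (intro exI allI)
    fix i
    define L where "L = B' / e / (p - 1)"
    have "(p - 1) * L = B' / e"
      using \<open>1 < p\<close> by (simp add: L_def)
    moreover have "B' / e < exp (B' / e)"
      using exp_ge_add_one_self[of "B' / e"] by linarith
    ultimately have "B' / e < exp ((p - 1) * L)"
      by simp
    then have "B' / exp ((p - 1) * L) < e"
      using \<open>0 < e\<close> by (simp add: field_simps)
    then have "exp (- ((p - 1) * L)) * B' < e"
      by (simp add: exp_minus inverse_eq_divide)
    then have "ennreal (exp (- ((p - 1) * L)) * B') < ennreal e"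
      using \<open>0 < e\<close> by (simp add: ennreal_lessI)
    then show "(\<integral>\<^sup>+x. ennreal (indicator {y. exp L < \<bar>exp (s i y)\<bar>} x * \<bar>exp (s i x)\<bar>) \<partial>M) < ennreal e"
      by (rule le_less_trans[OF tail])
  qed
  show ?thesis
    unfolding uniformly_integrable_def by (intro conjI allI impI integrable small_tail)
qed

lemma sq_gt_of_ge_threshold:
  fixes N C :: real
  assumes "0 < N" and "C \<ge> sqrt (2 / N) * sqrt (1 / (1 - (1/2) powr (2 / N)))"
  shows "2 / N < C\<^sup>2"
proof -
  have "(1/2::real) powr (2 / N) < 1 powr (2 / N)"
    using \<open>0 < N\<close> by (intro powr_less_mono2) auto
  then have "1 < sqrt (1 / (1 - (1/2) powr (2 / N)))"
    by simp
  then have "sqrt (2 / N) * 1 < sqrt (2 / N) * sqrt (1 / (1 - (1/2) powr (2 / N)))"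
    using \<open>0 < N\<close> by (intro mult_strict_left_mono) auto
  then have "sqrt (2 / N) < C"
    using assms(2) by linarith
  then have "(sqrt (2 / N))\<^sup>2 < C\<^sup>2"
    using \<open>0 < N\<close> by (intro power_strict_mono) auto
  then show ?thesis
    using \<open>0 < N\<close> by simp
qed

theorem mainTheorem2:
  fixes M :: "'b measure" and X :: "nat \<Rightarrow> 'b \<Rightarrow> 'a::euclidean_space" and C :: real
  assumes "prob_space M"
    and "prob_space.indep_vars M (\<lambda>_. borel) X UNIV"
    and "\<And>j. distr M borel (X j) = sphere_unif"
    and "C \<ge> sqrt (2 / real DIM('a)) * sqrt (1 / (1 - (1/2) powr (2 / real DIM('a))))"
  shows "uniformly_integrable M
           (\<lambda>n \<omega>. exp ((norm (\<Sum>j\<in>{1..n}. (1 / sqrt (real n)) *\<^sub>R X j \<omega>))\<^sup>2 / C\<^sup>2))"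
proof -
  interpret prob_space M by fact
  have [measurable]: "X j \<in> borel_measurable M" for j
    using assms(2) unfolding indep_vars_def2 by auto
  define Y where "Y n \<omega> = (\<Sum>j\<in>{1..n}. (1 / sqrt (real n)) *\<^sub>R X j \<omega>)" for n \<omega>
  have [measurable]: "Y n \<in> borel_measurable M" for n
    unfolding Y_def by measurable
  define c where "c = 1 / (2 * real DIM('a))"
  define p where "p = (1 + real DIM('a) * C\<^sup>2 / 2) / 2"
  have "2 / real DIM('a) < C\<^sup>2"
    using assms(4) by (intro sq_gt_of_ge_threshold) auto
  then have p: "1 < p" "4 * (p / C\<^sup>2) * c < 1"
    by (auto simp: p_def c_def field_simps)
  have "(\<integral>\<^sup>+\<omega>. ennreal (exp (w \<bullet> X j \<omega>)) \<partial>M) \<le> ennreal (exp (c * (norm w)\<^sup>2))" for j w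
    using nn_integral_exp_inner_sphere_unif_le[of w]
    by (simp add: assms(3)[of j, symmetric] nn_integral_distr c_def)
  then have "(\<integral>\<^sup>+\<omega>. ennreal (exp (w \<bullet> Y n \<omega>)) \<partial>M) \<le> ennreal (exp (c * (norm w)\<^sup>2))" for n w
    unfolding Y_def using indep_vars_subset[OF assms(2)]
    by (intro nn_integral_exp_inner_normalized_sum_le) (auto simp: c_def)
  then have exp_moment: "(\<integral>\<^sup>+\<omega>. ennreal (exp (p * ((norm (Y n \<omega>))\<^sup>2 / C\<^sup>2))) \<partial>M)
      \<le> ennreal ((1 / sqrt (1 - 4 * (p / C\<^sup>2) * c)) ^ DIM('a))" for n
    using nn_integral_exp_norm_sq_le_of_mgf_le[of M "Y n" c "p / C\<^sup>2"] p
      prob_space_imp_sigma_finite[OF assms(1)]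
    by simp
  have "uniformly_integrable M (\<lambda>n \<omega>. exp ((norm (Y n \<omega>))\<^sup>2 / C\<^sup>2))"
    by (rule uniformly_integrable_exp[where s="\<lambda>n \<omega>. (norm (Y n \<omega>))\<^sup>2 / C\<^sup>2", OF _ _ p(1) exp_moment])
      simp_all
  then show ?thesis
    unfolding Y_def .
qed

end
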